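(* Let $n\ge 1$ and let $H_n$ be the pyrene system with $n$ pyrene fragments. For every perfect matching $M$ of $H_n$, $f(H_n,M)=h(M)$.
   Context: Pyrene system: draw the hexagonal lattice so that every hexagon has two vertical sides; horizontally adjacent hexagons then share a vertical edge. For $n\ge1$, $H_n$ is the hexagonal system (the plane graph formed by the vertices and edges of the following $4n$ hexagons) consisting of a horizontal linear row of $2n$ hexagons $h_{1,1},h_{1,2},h_{2,1},h_{2,2},\dots,h_{n,1},h_{n,2}$, consecutive ones sharing a vertical edge, together with, for each $i=1,\dots,n$, a hexagon $s_{i,1}$ lying directly above and a hexagon $s_{i,2}$ lying directly below the common edge of $h_{i,1}$ and $h_{i,2}$ (each of $s_{i,1},s_{i,2}$ shares an edge with both $h_{i,1}$ and $h_{i,2}$). Each set $\{h_{i,1},h_{i,2},s_{i,1},s_{i,2}\}$ is a pyrene fragment. For a perfect matching $M$ of a graph $G$: a forcing set of $M$ is a subset $S\subseteq M$ contained in no other perfect matching of $G$; the forcing number $f(G,M)$ is the minimum size of a forcing set of $M$. A cycle is $M$-alternating if its edges alternate between $M$ and $E(G)\setminus M$. An $M$-resonant set is a set of pairwise vertex-disjoint $M$-alternating hexagons (faces), and $h(M)$ is the maximum size of an $M$-resonant set. *)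

theory Defs
  imports Main
begin

(* Hexagonal lattice in the "brick-wall" model: vertices are integer points,
   a hexagon is identified by its lower-left corner (x,y) with x+y even and
   consists of the six vertices/edges below. Its two "vertical sides" are the
   edges at abscissae x and x+2; horizontally adjacent hexagons (x,y),(x+2,y)
   share a vertical edge. *)

type_synonym vert = "int \<times> int"
type_synonym edge = "vert set"

definition hex_vlist :: "int \<times> int \<Rightarrow> vert list" where
  "hex_vlist c = (case c of (x,y) \<Rightarrow>
     [(x,y), (x+1,y), (x+2,y), (x+2,y+1), (x+1,y+1), (x,y+1)])"

definition hex_verts :: "int \<times> int \<Rightarrow> vert set" where
  "hex_verts c = set (hex_vlist c)"

definition hex_elist :: "int \<times> int \<Rightarrow> edge list" where
  "hex_elist c = map (\<lambda>i. {hex_vlist c ! i, hex_vlist c ! ((i+1) mod 6)}) [0..<6]"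

definition hex_edges :: "int \<times> int \<Rightarrow> edge set" where
  "hex_edges c = set (hex_elist c)"

(* The 4n hexagons of the pyrene system H_n (pyrene fragment i = 0..n-1):
   h_{i,1} = (4i,0), h_{i,2} = (4i+2,0) (row of 2n hexagons),
   s_{i,1} = (4i+1,1) directly above and s_{i,2} = (4i+1,-1) directly below
   the common vertical edge {(4i+2,0),(4i+2,1)} of h_{i,1}, h_{i,2}. *)
definition pyrene_hexagons :: "nat \<Rightarrow> (int \<times> int) set" where
  "pyrene_hexagons n = (\<Union>i\<in>{..<n}.
     {(4 * int i, 0), (4 * int i + 2, 0), (4 * int i + 1, 1), (4 * int i + 1, -1)})"

definition pyrene_V :: "nat \<Rightarrow> vert set" where
  "pyrene_V n = (\<Union>c\<in>pyrene_hexagons n. hex_verts c)"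

definition pyrene_E :: "nat \<Rightarrow> edge set" where
  "pyrene_E n = (\<Union>c\<in>pyrene_hexagons n. hex_edges c)"

definition perfect_matching :: "'a set \<Rightarrow> 'a set set \<Rightarrow> 'a set set \<Rightarrow> bool" where
  "perfect_matching V E M \<longleftrightarrow> M \<subseteq> E \<and> (\<forall>v\<in>V. \<exists>!e. e \<in> M \<and> v \<in> e)"

definition forcing_set :: "'a set \<Rightarrow> 'a set set \<Rightarrow> 'a set set \<Rightarrow> 'a set set \<Rightarrow> bool" where
  "forcing_set V E M S \<longleftrightarrow> S \<subseteq> M \<and>
     (\<forall>M'. perfect_matching V E M' \<and> S \<subseteq> M' \<longrightarrow> M' = M)"

definition forcing_number :: "'a set \<Rightarrow> 'a set set \<Rightarrow> 'a set set \<Rightarrow> nat" where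
  "forcing_number V E M = Min (card ` {S. forcing_set V E M S})"

definition alternating_cycle :: "'a set set \<Rightarrow> 'a set list \<Rightarrow> bool" where
  "alternating_cycle M es \<longleftrightarrow>
     (\<forall>i<length es. (es ! i \<in> M) \<noteq> (es ! ((i+1) mod length es) \<in> M))"

definition resonant_set :: "(int \<times> int) set \<Rightarrow> edge set \<Rightarrow> (int \<times> int) set \<Rightarrow> bool" where
  "resonant_set Hs M R \<longleftrightarrow> R \<subseteq> Hs \<and>
     (\<forall>c\<in>R. alternating_cycle M (hex_elist c)) \<and>
     (\<forall>c\<in>R. \<forall>d\<in>R. c \<noteq> d \<longrightarrow> hex_verts c \<inter> hex_verts d = {})"

definition max_resonant :: "(int \<times> int) set \<Rightarrow> edge set \<Rightarrow> nat" where
  "max_resonant Hs M = Max (card ` {R. resonant_set Hs M R})"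

end

theory Submission
  imports Defs
begin

(* In every perfect matching M of H_n the two horizontal edges leaving the column x = 4i to the
   right (one in each row) are both in M or both not in M: otherwise the mismatch propagates
   through all later fragments and cannot be closed off at the right end of H_n.  Hence in each
   fragment h_{i,1} or h_{i,2} is M-alternating, or both s_{i,1} and s_{i,2} are, and these
   hexagons form an M-resonant set R.  The part of M inside a fragment is determined by four of
   its edges together with those of the neighbouring fragments, and the M-edges on the bottom
   sides of the hexagons of R pin these down; so they form a forcing set of size at most |R|,
   and f(H_n, M) <= h(M).  Conversely, a forcing set S meets every M-alternating hexagon, since
   flipping a hexagon that avoids S gives a second perfect matching containing S; the hexagons
   of a resonant set are disjoint, so they need distinct edges of S, and h(M) <= f(H_n, M). *)

section \<open>Hexagons of the brick-wall lattice\<close>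

definition hedge :: "int \<Rightarrow> int \<Rightarrow> edge" where
  "hedge x y = {(x, y), (x + 1, y)}"

definition vedge :: "int \<Rightarrow> int \<Rightarrow> edge" where
  "vedge x y = {(x, y), (x, y + 1)}"

lemma hedge_eq_iff [simp]: "hedge x y = hedge x' y' \<longleftrightarrow> x = x' \<and> y = y'"
  by (auto simp: hedge_def doubleton_eq_iff)

lemma vedge_eq_iff [simp]: "vedge x y = vedge x' y' \<longleftrightarrow> x = x' \<and> y = y'"
  by (auto simp: vedge_def doubleton_eq_iff)

lemma hedge_neq_vedge [simp]: "hedge x y \<noteq> vedge x' y'" "vedge x' y' \<noteq> hedge x y"
  by (auto simp: hedge_def vedge_def doubleton_eq_iff)

lemma mem_hedge: "(p, q) \<in> hedge x y \<longleftrightarrow> q = y \<and> (x = p \<or> x = p - 1)"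
  by (auto simp: hedge_def)

lemma mem_vedge: "(p, q) \<in> vedge x y \<longleftrightarrow> x = p \<and> (y = q \<or> y = q - 1)"
  by (auto simp: vedge_def)

lemma lattice_edge_at_point:
  "e = hedge x' y' \<or> e = vedge x' y' \<Longrightarrow> (x, y) \<in> e \<Longrightarrow>
     e = hedge (x - 1) y \<or> e = hedge x y \<or> e = vedge x y \<or> e = vedge x (y - 1)"
  by (elim disjE) (auto simp: mem_hedge mem_vedge)

lemma hex_verts_eq:
  "hex_verts (x, y) = {(x, y), (x + 1, y), (x + 2, y), (x + 2, y + 1), (x + 1, y + 1), (x, y + 1)}"
  by (simp add: hex_verts_def hex_vlist_def)

lemma hex_elist_eq:
  "hex_elist (x, y) =
     [hedge x y, hedge (x + 1) y, vedge (x + 2) y, hedge (x + 1) (y + 1), hedge x (y + 1), vedge x y]"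
  by (simp add: hex_elist_def hex_vlist_def hedge_def vedge_def upt_rec) (auto simp: insert_commute)

lemma hex_edges_eq:
  "hex_edges (x, y) =
     {hedge x y, hedge (x + 1) y, vedge (x + 2) y, hedge (x + 1) (y + 1), hedge x (y + 1), vedge x y}"
  by (simp add: hex_edges_def hex_elist_eq)

lemma hex_verts_disjointI:
  "\<bar>fst c - fst d\<bar> > 2 \<or> \<bar>snd c - snd d\<bar> > 1 \<Longrightarrow> hex_verts c \<inter> hex_verts d = {}"
  by (cases c; cases d) (auto simp: hex_verts_eq)

lemma hex_edge_subset_verts: "e \<in> hex_edges c \<Longrightarrow> e \<noteq> {} \<and> e \<subseteq> hex_verts c"
  by (cases c) (auto simp: hex_edges_eq hex_verts_eq hedge_def vedge_def)

lemma hex_edges_at_vertex: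
  assumes "v \<in> hex_verts c"
  shows "\<exists>i<6. {e \<in> hex_edges c. v \<in> e} = {hex_elist c ! i, hex_elist c ! ((i + 1) mod 6)}"
proof -
  obtain x y where c: "c = (x, y)" by (cases c)
  have "length (hex_vlist c) = 6" by (simp add: c hex_vlist_def)
  then obtain j where j: "j < 6" "v = hex_vlist c ! j"
    using assms by (metis hex_verts_def in_set_conv_nth)
  \<comment> \<open>vertex \<open>j\<close> lies on the edges \<open>j - 1\<close> and \<open>j\<close> of the cyclic edge list\<close>
  have "j = 0 \<or> j = 1 \<or> j = 2 \<or> j = 3 \<or> j = 4 \<or> j = 5"
    using j(1) by (simp add: numeral_eq_Suc less_Suc_eq)
  then have "{e \<in> hex_edges c. v \<in> e} =
      {hex_elist c ! ((j + 5) mod 6), hex_elist c ! (((j + 5) mod 6 + 1) mod 6)}"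
    unfolding j(2) c hex_edges_eq hex_elist_eq hex_vlist_def
    by (elim disjE) (simp_all, auto simp: mem_hedge mem_vedge)
  then show ?thesis
    by (intro exI[of _ "(j + 5) mod 6"]) simp
qed

lemma alternating_hexagon_iff:
  "alternating_cycle M (hex_elist (x, y)) \<longleftrightarrow>
     (hedge x y \<in> M) \<noteq> (hedge (x + 1) y \<in> M) \<and>
     (hedge (x + 1) y \<in> M) \<noteq> (vedge (x + 2) y \<in> M) \<and>
     (vedge (x + 2) y \<in> M) \<noteq> (hedge (x + 1) (y + 1) \<in> M) \<and>
     (hedge (x + 1) (y + 1) \<in> M) \<noteq> (hedge x (y + 1) \<in> M) \<and>
     (hedge x (y + 1) \<in> M) \<noteq> (vedge x y \<in> M) \<and>
     (vedge x y \<in> M) \<noteq> (hedge x y \<in> M)"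
proof -
  have six: "(\<forall>i<(6::nat). P i) \<longleftrightarrow> P 0 \<and> P 1 \<and> P 2 \<and> P 3 \<and> P 4 \<and> P 5" for P
    by (auto simp: numeral_eq_Suc All_less_Suc)
  have len: "length (hex_elist (x, y)) = 6" by (simp add: hex_elist_def)
  show ?thesis
    unfolding alternating_cycle_def len six by (simp add: hex_elist_eq)
qed

definition matched_bottom_edge :: "edge set \<Rightarrow> int \<times> int \<Rightarrow> edge" where
  "matched_bottom_edge M c =
     (case c of (x, y) \<Rightarrow> if hedge x y \<in> M then hedge x y else hedge (x + 1) y)"

lemma matched_bottom_edge_in:
  assumes "alternating_cycle M (hex_elist c)"
  shows "matched_bottom_edge M c \<in> M"
proof -
  obtain x y where c: "c = (x, y)" by (cases c)
  have "(hedge x y \<in> M) \<noteq> (hedge (x + 1) y \<in> M)"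
    using assms unfolding c alternating_hexagon_iff by blast
  then show ?thesis by (simp add: c matched_bottom_edge_def)
qed

lemma matched_bottom_edge_mem_iff:
  "matched_bottom_edge M (x, y) \<in> M' \<longleftrightarrow>
     hedge x y \<in> M \<and> hedge x y \<in> M' \<or> hedge x y \<notin> M \<and> hedge (x + 1) y \<in> M'"
  by (simp add: matched_bottom_edge_def)

section \<open>Forcing sets versus resonant sets\<close>

lemma perfect_matching_flip:
  assumes PM: "perfect_matching V E M" and "H \<subseteq> E"
    and alternating: "\<And>v. v \<in> V \<Longrightarrow> v \<in> \<Union>H \<Longrightarrow>
      \<exists>f g. {e \<in> H. v \<in> e} = {f, g} \<and> (f \<in> M \<longleftrightarrow> g \<notin> M)"
  shows "perfect_matching V E (M - H \<union> (H - M))"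
  unfolding perfect_matching_def
proof (intro conjI ballI)
  show "M - H \<union> (H - M) \<subseteq> E"
    using PM \<open>H \<subseteq> E\<close> by (auto simp: perfect_matching_def)
next
  fix v assume v: "v \<in> V"
  then obtain e0 where e0: "e0 \<in> M" "v \<in> e0" and unique: "\<And>e. e \<in> M \<Longrightarrow> v \<in> e \<Longrightarrow> e = e0"
    using PM unfolding perfect_matching_def by metis
  show "\<exists>!e. e \<in> M - H \<union> (H - M) \<and> v \<in> e"
  proof (cases "v \<in> \<Union>H")
    case False
    then have "e \<in> M - H \<union> (H - M) \<and> v \<in> e \<longleftrightarrow> e = e0" for e
      using e0 unique by blast
    then show ?thesis by (intro ex1I[of _ e0]) simp_all
  next
    case True
    from alternating[OF v True] obtain f g
      where fg: "{e \<in> H. v \<in> e} = {f, g}" "f \<in> M \<longleftrightarrow> g \<notin> M"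
      by blast
    then have "f \<in> M \<longrightarrow> f = e0" "g \<in> M \<longrightarrow> g = e0"
      using unique by blast+
    then obtain e1 where "{e \<in> H. v \<in> e} = {e0, e1}" "e1 \<notin> M"
      using fg by (metis insert_commute)
    then have at_v: "e \<in> H \<and> v \<in> e \<longleftrightarrow> e = e0 \<or> e = e1" and "e1 \<notin> M" for e
      unfolding set_eq_iff by auto
    show ?thesis
    proof (rule ex1I[of _ e1])
      show "e1 \<in> M - H \<union> (H - M) \<and> v \<in> e1"
        using at_v[of e1] \<open>e1 \<notin> M\<close> by blast
    next
      fix e assume e: "e \<in> M - H \<union> (H - M) \<and> v \<in> e"
      show "e = e1"
      proof (cases "e \<in> M")
        case True
        then show ?thesis using unique[of e] e at_v[of e0] by blast
      next
        case False
        then show ?thesis using e e0(1) at_v[of e] by blast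
      qed
    qed
  qed
qed

lemma perfect_matching_flip_hexagon:
  assumes "perfect_matching V E M" "hex_edges c \<subseteq> E" "alternating_cycle M (hex_elist c)"
  shows "perfect_matching V E (M - hex_edges c \<union> (hex_edges c - M))"
proof (rule perfect_matching_flip[OF assms(1,2)])
  fix v assume "v \<in> \<Union> (hex_edges c)"
  then obtain i where i: "i < 6"
      "{e \<in> hex_edges c. v \<in> e} = {hex_elist c ! i, hex_elist c ! ((i + 1) mod 6)}"
    using hex_edges_at_vertex hex_edge_subset_verts by blast
  have len: "length (hex_elist c) = 6" by (simp add: hex_elist_def)
  have "(hex_elist c ! i \<in> M) \<noteq> (hex_elist c ! ((i + 1) mod 6) \<in> M)"
    using assms(3)[unfolded alternating_cycle_def len, rule_format, OF i(1)] .
  then show "\<exists>f g. {e \<in> hex_edges c. v \<in> e} = {f, g} \<and> (f \<in> M \<longleftrightarrow> g \<notin> M)"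
    unfolding i(2) by blast
qed

lemma forcing_setD: "forcing_set V E M S \<Longrightarrow> perfect_matching V E M' \<Longrightarrow> S \<subseteq> M' \<Longrightarrow> M' = M"
  by (simp add: forcing_set_def)

lemma forcing_set_meets_alternating_hexagon:
  assumes "perfect_matching V E M" "forcing_set V E M S"
    and "hex_edges c \<subseteq> E" "alternating_cycle M (hex_elist c)"
  shows "S \<inter> hex_edges c \<noteq> {}"
proof
  assume disjoint: "S \<inter> hex_edges c = {}"
  let ?M' = "M - hex_edges c \<union> (hex_edges c - M)"
  have "perfect_matching V E ?M'"
    using perfect_matching_flip_hexagon assms(1,3,4) .
  moreover have "S \<subseteq> ?M'" using assms(2) disjoint by (auto simp: forcing_set_def)
  ultimately have "?M' = M" by (rule forcing_setD[OF assms(2)])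
  obtain x y where "c = (x, y)" by (cases c)
  then have "hedge x y \<in> hex_edges c" by (simp add: hex_edges_eq)
  then have "hedge x y \<in> ?M' \<longleftrightarrow> hedge x y \<notin> M" by blast
  with \<open>?M' = M\<close> show False by simp
qed

lemma card_resonant_le_card_forcing:
  assumes PM: "perfect_matching V E M" and "finite E"
    and hexagons: "\<And>c. c \<in> Hs \<Longrightarrow> hex_edges c \<subseteq> E"
    and S: "forcing_set V E M S" and R: "resonant_set Hs M R"
  shows "card R \<le> card S"
proof -
  have "\<forall>c\<in>R. \<exists>e. e \<in> S \<inter> hex_edges c"
    using R forcing_set_meets_alternating_hexagon[OF PM S hexagons]
    unfolding resonant_set_def by blast
  from bchoice[OF this] obtain pick where pick: "\<forall>c\<in>R. pick c \<in> S \<inter> hex_edges c" ..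
  have "inj_on pick R"
  proof (rule inj_onI)
    fix c d assume "c \<in> R" "d \<in> R" "pick c = pick d"
    then have "pick c \<noteq> {}" "pick c \<subseteq> hex_verts c" "pick c \<subseteq> hex_verts d"
      using pick hex_edge_subset_verts by blast+
    then show "c = d"
      using R \<open>c \<in> R\<close> \<open>d \<in> R\<close> unfolding resonant_set_def by blast
  qed
  moreover have "finite S"
    using S PM \<open>finite E\<close> unfolding forcing_set_def perfect_matching_def by (meson finite_subset)
  ultimately show ?thesis
    using pick by (intro card_inj_on_le) auto
qed

lemma Min_eq_Max_by_duality:
  fixes A B :: "'a::linorder set"
  assumes "finite A" "finite B" "a \<in> A" "b \<in> B" "a \<le> b"
    and "\<And>x y. x \<in> A \<Longrightarrow> y \<in> B \<Longrightarrow> y \<le> x"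
  shows "Min A = Max B"
proof (rule antisym)
  show "Min A \<le> Max B"
    using assms(1-5) by (meson Max_ge Min_le order_trans)
  show "Max B \<le> Min A"
    using assms by (metis Max_in Min_in empty_iff)
qed

lemma forcing_number_eq_max_resonant:
  assumes PM: "perfect_matching V E M" and "finite E" and "finite Hs"
    and hexagons: "\<And>c. c \<in> Hs \<Longrightarrow> hex_edges c \<subseteq> E"
    and S: "forcing_set V E M S" and R: "resonant_set Hs M R" and "card S \<le> card R"
  shows "forcing_number V E M = max_resonant Hs M"
  unfolding forcing_number_def max_resonant_def
proof (rule Min_eq_Max_by_duality)
  have "finite M" using PM \<open>finite E\<close> unfolding perfect_matching_def by (meson finite_subset)
  then show "finite (card ` {S. forcing_set V E M S})"
    unfolding forcing_set_def by (auto intro: finite_subset[of _ "Pow M"])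
  show "finite (card ` {R. resonant_set Hs M R})"
    using \<open>finite Hs\<close> unfolding resonant_set_def by (auto intro: finite_subset[of _ "Pow Hs"])
  show "card S \<in> card ` {S. forcing_set V E M S}" "card R \<in> card ` {R. resonant_set Hs M R}"
    using S R by auto
  show "card S \<le> card R" by fact
  fix x y assume "x \<in> card ` {S. forcing_set V E M S}" "y \<in> card ` {R. resonant_set Hs M R}"
  then obtain S' R' where "forcing_set V E M S'" "resonant_set Hs M R'" "x = card S'" "y = card R'"
    by blast
  then show "y \<le> x"
    using card_resonant_le_card_forcing[OF PM \<open>finite E\<close> hexagons] by simp
qed

section \<open>Perfect matchings of the pyrene system\<close>

definition fragment_edges :: "int \<Rightarrow> edge set" where
  "fragment_edges a =
     hex_edges (a, 0) \<union> hex_edges (a + 2, 0) \<union> hex_edges (a + 1, 1) \<union> hex_edges (a + 1, -1)"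

lemma fragment_edges_eq:
  "fragment_edges a =
     {hedge a 0, hedge (a + 1) 0, hedge (a + 2) 0, hedge (a + 3) 0,
      hedge a 1, hedge (a + 1) 1, hedge (a + 2) 1, hedge (a + 3) 1,
      vedge a 0, vedge (a + 2) 0, vedge (a + 4) 0, vedge (a + 1) 1, vedge (a + 3) 1,
      hedge (a + 1) 2, hedge (a + 2) 2, vedge (a + 1) (-1), vedge (a + 3) (-1),
      hedge (a + 1) (-1), hedge (a + 2) (-1)}"
  unfolding fragment_edges_def hex_edges_eq by (simp add: ac_simps insert_commute)

lemma pyrene_E_eq: "pyrene_E n = (\<Union>i<n. fragment_edges (4 * int i))"
  unfolding pyrene_E_def pyrene_hexagons_def fragment_edges_def by auto

lemma finite_pyrene_E: "finite (pyrene_E n)"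
  by (simp add: pyrene_E_eq fragment_edges_eq)

lemma finite_pyrene_hexagons: "finite (pyrene_hexagons n)"
  by (simp add: pyrene_hexagons_def)

lemma hex_edges_subset_pyrene_E: "c \<in> pyrene_hexagons n \<Longrightarrow> hex_edges c \<subseteq> pyrene_E n"
  by (auto simp: pyrene_E_def)

lemma hex_verts_subset_pyrene_V: "c \<in> pyrene_hexagons n \<Longrightarrow> hex_verts c \<subseteq> pyrene_V n"
  by (auto simp: pyrene_V_def)

lemma fragment_hexagons_subset:
  "i < n \<Longrightarrow> {(4 * int i, 0), (4 * int i + 2, 0), (4 * int i + 1, 1), (4 * int i + 1, -1)}
     \<subseteq> pyrene_hexagons n"
  by (auto simp: pyrene_hexagons_def)

lemma pyrene_edge_cases: "e \<in> pyrene_E n \<Longrightarrow> \<exists>x y. e = hedge x y \<or> e = vedge x y"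
  unfolding pyrene_E_eq fragment_edges_eq by blast

lemma hedge_in_pyrene_E:
  assumes "hedge x y \<in> pyrene_E n"
  shows "(y = 0 \<or> y = 1) \<and> 0 \<le> x \<and> x < 4 * int n \<or> (y = -1 \<or> y = 2) \<and> (x mod 4 = 1 \<or> x mod 4 = 2)"
proof -
  obtain i where "i < n" "hedge x y \<in> fragment_edges (4 * int i)"
    using assms unfolding pyrene_E_eq by blast
  then show ?thesis
    unfolding fragment_edges_eq by (elim insertE emptyE) auto
qed

lemma vedge_in_pyrene_E:
  assumes "vedge x y \<in> pyrene_E n"
  shows "y = 0 \<and> even x \<or> (y = -1 \<or> y = 1) \<and> odd x"
proof -
  obtain i where "vedge x y \<in> fragment_edges (4 * int i)"
    using assms unfolding pyrene_E_eq by blast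
  then show ?thesis
    unfolding fragment_edges_eq by (elim insertE emptyE) auto
qed

lemma fragment_non_edges_unmatched:
  assumes "perfect_matching (pyrene_V n) (pyrene_E n) M" and "a = 4 * int i"
  shows "hedge a 2 \<notin> M" "hedge (a + 3) 2 \<notin> M" "hedge a (-1) \<notin> M" "hedge (a + 3) (-1) \<notin> M"
    "vedge a (-1) \<notin> M" "vedge a 1 \<notin> M" "vedge (a + 1) 0 \<notin> M" "vedge (a + 1) 2 \<notin> M"
    "vedge (a + 1) (-2) \<notin> M" "vedge (a + 2) 1 \<notin> M" "vedge (a + 2) 2 \<notin> M" "vedge (a + 2) (-1) \<notin> M"
    "vedge (a + 2) (-2) \<notin> M" "vedge (a + 3) 0 \<notin> M" "vedge (a + 3) 2 \<notin> M" "vedge (a + 3) (-2) \<notin> M"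
    "vedge (a + 4) (-1) \<notin> M" "vedge (a + 4) 1 \<notin> M"
  using assms by (auto simp: perfect_matching_def dest!: hedge_in_pyrene_E vedge_in_pyrene_E)

lemma pyrene_end_edges_unmatched:
  assumes "perfect_matching (pyrene_V n) (pyrene_E n) M" and "y = 0 \<or> y = 1"
  shows "hedge (-1) y \<notin> M" "hedge (4 * int n) y \<notin> M"
  using assms by (auto simp: perfect_matching_def dest!: hedge_in_pyrene_E)

fun exactly_one :: "bool list \<Rightarrow> bool" where
  "exactly_one [] \<longleftrightarrow> False"
| "exactly_one (b # bs) \<longleftrightarrow> b \<and> (\<forall>c\<in>set bs. \<not> c) \<or> \<not> b \<and> exactly_one bs"

lemmas exactly_one_unfold = exactly_one.simps list.set ball_simps simp_thms

lemma pyrene_vertex_matched_once: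
  assumes PM: "perfect_matching (pyrene_V n) (pyrene_E n) M" and "(x, y) \<in> pyrene_V n"
  shows "exactly_one [hedge (x - 1) y \<in> M, hedge x y \<in> M, vedge x y \<in> M, vedge x (y - 1) \<in> M]"
proof -
  obtain e0 where e0: "e0 \<in> M" "(x, y) \<in> e0" and unique: "\<And>e. e \<in> M \<Longrightarrow> (x, y) \<in> e \<Longrightarrow> e = e0"
    using assms unfolding perfect_matching_def by metis
  have "e0 \<in> pyrene_E n" using PM e0(1) by (auto simp: perfect_matching_def)
  then obtain x' y' where "e0 = hedge x' y' \<or> e0 = vedge x' y'"
    using pyrene_edge_cases by blast
  then have "e0 = hedge (x - 1) y \<or> e0 = hedge x y \<or> e0 = vedge x y \<or> e0 = vedge x (y - 1)"
    using e0(2) by (rule lattice_edge_at_point)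
  moreover have "(x, y) \<in> hedge (x - 1) y" "(x, y) \<in> hedge x y" "(x, y) \<in> vedge x y"
      "(x, y) \<in> vedge x (y - 1)"
    by (simp_all add: mem_hedge mem_vedge)
  then have "hedge (x - 1) y \<in> M \<longleftrightarrow> hedge (x - 1) y = e0" "hedge x y \<in> M \<longleftrightarrow> hedge x y = e0"
      "vedge x y \<in> M \<longleftrightarrow> vedge x y = e0" "vedge x (y - 1) \<in> M \<longleftrightarrow> vedge x (y - 1) = e0"
    using e0 unique by blast+
  ultimately show ?thesis
    by (elim disjE) simp_all
qed

lemma fragment_vertex_matched_once:
  assumes PM: "perfect_matching (pyrene_V n) (pyrene_E n) M" and i: "i < n" and a: "a = 4 * int i"
    and k: "(k = 0 \<or> k = 4) \<and> (y = 0 \<or> y = 1) \<or> (k = 1 \<or> k = 2 \<or> k = 3) \<and> -1 \<le> y \<and> y \<le> 2"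
  shows "exactly_one [hedge (a + k - 1) y \<in> M, hedge (a + k) y \<in> M, vedge (a + k) y \<in> M,
    vedge (a + k) (y - 1) \<in> M]"
proof (rule pyrene_vertex_matched_once[OF PM])
  have "hex_verts (a, 0) \<union> hex_verts (a + 2, 0) \<union> hex_verts (a + 1, 1) \<union> hex_verts (a + 1, -1)
      \<subseteq> pyrene_V n"
    using fragment_hexagons_subset[OF i] hex_verts_subset_pyrene_V unfolding a by blast
  moreover have "y = -1 \<or> y = 0 \<or> y = 1 \<or> y = 2" using k by linarith
  ultimately show "(a + k, y) \<in> pyrene_V n"
    using k by (auto simp: hex_verts_eq ac_simps)
qed

lemma fragment_vertex_constraints:
  assumes "perfect_matching (pyrene_V n) (pyrene_E n) M" and "i < n" and "a = 4 * int i"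
  shows "exactly_one [hedge (a + 1) 2 \<in> M, vedge (a + 1) 1 \<in> M]"
    and "exactly_one [hedge (a + 1) 2 \<in> M, hedge (a + 2) 2 \<in> M]"
    and "exactly_one [hedge (a + 2) 2 \<in> M, vedge (a + 3) 1 \<in> M]"
    and "exactly_one [hedge (a + 1) (-1) \<in> M, vedge (a + 1) (-1) \<in> M]"
    and "exactly_one [hedge (a + 1) (-1) \<in> M, hedge (a + 2) (-1) \<in> M]"
    and "exactly_one [hedge (a + 2) (-1) \<in> M, vedge (a + 3) (-1) \<in> M]"
    and "exactly_one [hedge a 1 \<in> M, hedge (a + 1) 1 \<in> M, vedge (a + 1) 1 \<in> M]"
    and "exactly_one [hedge (a + 1) 1 \<in> M, hedge (a + 2) 1 \<in> M, vedge (a + 2) 0 \<in> M]"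
    and "exactly_one [hedge (a + 2) 1 \<in> M, hedge (a + 3) 1 \<in> M, vedge (a + 3) 1 \<in> M]"
    and "exactly_one [hedge a 0 \<in> M, hedge (a + 1) 0 \<in> M, vedge (a + 1) (-1) \<in> M]"
    and "exactly_one [hedge (a + 1) 0 \<in> M, hedge (a + 2) 0 \<in> M, vedge (a + 2) 0 \<in> M]"
    and "exactly_one [hedge (a + 2) 0 \<in> M, hedge (a + 3) 0 \<in> M, vedge (a + 3) (-1) \<in> M]"
    and "exactly_one [hedge (a - 1) 0 \<in> M, hedge a 0 \<in> M, vedge a 0 \<in> M]"
    and "exactly_one [hedge (a - 1) 1 \<in> M, hedge a 1 \<in> M, vedge a 0 \<in> M]"
    and "exactly_one [hedge (a + 3) 0 \<in> M, hedge (a + 4) 0 \<in> M, vedge (a + 4) 0 \<in> M]"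
    and "exactly_one [hedge (a + 3) 1 \<in> M, hedge (a + 4) 1 \<in> M, vedge (a + 4) 0 \<in> M]"
  using fragment_vertex_matched_once[OF assms, of 1 2] fragment_vertex_matched_once[OF assms, of 2 2]
    fragment_vertex_matched_once[OF assms, of 3 2] fragment_vertex_matched_once[OF assms, of 1 1]
    fragment_vertex_matched_once[OF assms, of 2 1] fragment_vertex_matched_once[OF assms, of 3 1]
    fragment_vertex_matched_once[OF assms, of 1 0] fragment_vertex_matched_once[OF assms, of 2 0]
    fragment_vertex_matched_once[OF assms, of 3 0] fragment_vertex_matched_once[OF assms, of 0 0]
    fragment_vertex_matched_once[OF assms, of 0 1] fragment_vertex_matched_once[OF assms, of 4 0]
    fragment_vertex_matched_once[OF assms, of 4 1] fragment_vertex_matched_once[OF assms, of 1 "-1"]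
    fragment_vertex_matched_once[OF assms, of 2 "-1"]
    fragment_vertex_matched_once[OF assms, of 3 "-1"]
    fragment_non_edges_unmatched[OF assms(1,3)]
  by (simp_all add: ac_simps)

lemma mixed_rows_propagate:
  assumes PM: "perfect_matching (pyrene_V n) (pyrene_E n) M" and i: "i < n"
    and mixed: "(hedge (4 * int i) 0 \<in> M) \<noteq> (hedge (4 * int i) 1 \<in> M)"
  shows "Suc i < n \<and> (hedge (4 * int (Suc i)) 0 \<in> M) \<noteq> (hedge (4 * int (Suc i)) 1 \<in> M)"
proof -
  define a where "a = 4 * int i"
  have "(hedge (a + 4) 0 \<in> M) \<noteq> (hedge (a + 4) 1 \<in> M)"
    using fragment_vertex_constraints[OF PM i a_def, unfolded exactly_one_unfold] mixed
    unfolding a_def[symmetric] by sat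
  moreover have "Suc i \<noteq> n"
    using calculation pyrene_end_edges_unmatched(2)[OF PM, of 0]
      pyrene_end_edges_unmatched(2)[OF PM, of 1]
    by (auto simp: a_def ac_simps)
  ultimately show ?thesis using i by (simp add: a_def ac_simps)
qed

lemma fragment_left_rows_agree:
  assumes PM: "perfect_matching (pyrene_V n) (pyrene_E n) M" and "i < n" and a: "a = 4 * int i"
  shows "hedge a 0 \<in> M \<longleftrightarrow> hedge a 1 \<in> M"
proof (rule ccontr)
  assume "\<not> ?thesis"
  \<comment> \<open>the mismatch would reach a fragment beyond the right end of \<open>H\<^sub>n\<close>\<close>
  then have "i + k < n \<and> (hedge (4 * int (i + k)) 0 \<in> M) \<noteq> (hedge (4 * int (i + k)) 1 \<in> M)"
    for k
  proof (induction k)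
    case 0
    then show ?case using \<open>i < n\<close> a by simp
  next
    case (Suc k)
    then show ?case using mixed_rows_propagate[OF PM, of "i + k"] by simp
  qed
  from this[of n] show False by simp
qed

lemma fragment_right_rows_agree:
  assumes PM: "perfect_matching (pyrene_V n) (pyrene_E n) M" and i: "i < n" and a: "a = 4 * int i"
  shows "hedge (a + 3) 0 \<in> M \<longleftrightarrow> hedge (a + 3) 1 \<in> M"
proof -
  have "hedge (a + 4) 0 \<in> M \<longleftrightarrow> hedge (a + 4) 1 \<in> M"
  proof (cases "Suc i < n")
    case True
    then show ?thesis using fragment_left_rows_agree[OF PM True refl] a by (simp add: ac_simps)
  next
    case False
    then have "a + 4 = 4 * int n" using i a by simp
    then show ?thesis using pyrene_end_edges_unmatched[OF PM] by simp
  qed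
  then show ?thesis
    using fragment_vertex_constraints(15,16)[OF assms, unfolded exactly_one_unfold] by sat
qed

lemma fragment_matching_determined:
  assumes "perfect_matching (pyrene_V n) (pyrene_E n) M" and "i < n" and "a = 4 * int i"
  shows "hedge a 1 \<in> M \<longleftrightarrow> hedge a 0 \<in> M"
    and "hedge (a + 3) 1 \<in> M \<longleftrightarrow> hedge (a + 3) 0 \<in> M"
    and "vedge a 0 \<in> M \<longleftrightarrow> hedge (a - 1) 0 \<notin> M \<and> hedge a 0 \<notin> M"
    and "vedge (a + 4) 0 \<in> M \<longleftrightarrow> hedge (a + 3) 0 \<notin> M \<and> hedge (a + 4) 0 \<notin> M"
    and "vedge (a + 1) 1 \<in> M \<longleftrightarrow> hedge a 0 \<notin> M \<and> hedge (a + 1) 1 \<notin> M"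
    and "hedge (a + 1) 2 \<in> M \<longleftrightarrow> hedge a 0 \<in> M \<or> hedge (a + 1) 1 \<in> M"
    and "hedge (a + 2) 2 \<in> M \<longleftrightarrow> hedge a 0 \<notin> M \<and> hedge (a + 1) 1 \<notin> M"
    and "vedge (a + 3) 1 \<in> M \<longleftrightarrow> hedge a 0 \<in> M \<or> hedge (a + 1) 1 \<in> M"
    and "hedge (a + 2) 1 \<in> M \<longleftrightarrow> hedge (a + 3) 0 \<notin> M \<and> hedge a 0 \<notin> M \<and> hedge (a + 1) 1 \<notin> M"
    and "vedge (a + 2) 0 \<in> M \<longleftrightarrow> hedge (a + 1) 1 \<notin> M \<and> hedge (a + 2) 1 \<notin> M"
    and "vedge (a + 1) (-1) \<in> M \<longleftrightarrow> hedge a 0 \<notin> M \<and> hedge (a + 1) 0 \<notin> M"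
    and "hedge (a + 1) (-1) \<in> M \<longleftrightarrow> hedge a 0 \<in> M \<or> hedge (a + 1) 0 \<in> M"
    and "hedge (a + 2) (-1) \<in> M \<longleftrightarrow> hedge a 0 \<notin> M \<and> hedge (a + 1) 0 \<notin> M"
    and "vedge (a + 3) (-1) \<in> M \<longleftrightarrow> hedge a 0 \<in> M \<or> hedge (a + 1) 0 \<in> M"
    and "hedge (a + 2) 0 \<in> M \<longleftrightarrow> hedge (a + 3) 0 \<notin> M \<and> hedge a 0 \<notin> M \<and> hedge (a + 1) 0 \<notin> M"
    and "hedge a 0 \<in> M \<Longrightarrow> hedge (a + 3) 0 \<notin> M \<and> hedge (a + 1) 1 \<notin> M \<and> hedge (a + 1) 0 \<notin> M"
    and "hedge (a + 3) 0 \<in> M \<Longrightarrow> hedge (a + 1) 1 \<notin> M \<and> hedge (a + 1) 0 \<notin> M"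
  using fragment_vertex_constraints[OF assms, unfolded exactly_one_unfold]
    fragment_left_rows_agree[OF assms] fragment_right_rows_agree[OF assms]
  by sat+

section \<open>A resonant set whose bottom edges force the matching\<close>

definition fragment_resonant_hexagons :: "edge set \<Rightarrow> int \<Rightarrow> (int \<times> int) set" where
  "fragment_resonant_hexagons M a =
     (if hedge a 0 \<in> M then {(a, 0)}
      else if hedge (a + 3) 0 \<in> M then {(a + 2, 0)}
      else {(a + 1, 1), (a + 1, -1)})"

definition canonical_resonant_set :: "nat \<Rightarrow> edge set \<Rightarrow> (int \<times> int) set" where
  "canonical_resonant_set n M = (\<Union>i<n. fragment_resonant_hexagons M (4 * int i))"

lemma fragment_resonant_hexagons_alternating:
  assumes PM: "perfect_matching (pyrene_V n) (pyrene_E n) M" and i: "i < n" and a: "a = 4 * int i"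
    and c: "c \<in> fragment_resonant_hexagons M a"
  shows "alternating_cycle M (hex_elist c)"
proof -
  note determined = fragment_matching_determined[OF PM i a]
  from c consider "hedge a 0 \<in> M" "c = (a, 0)"
    | "hedge a 0 \<notin> M" "hedge (a + 3) 0 \<in> M" "c = (a + 2, 0)"
    | "hedge a 0 \<notin> M" "hedge (a + 3) 0 \<notin> M" "c = (a + 1, 1)"
    | "hedge a 0 \<notin> M" "hedge (a + 3) 0 \<notin> M" "c = (a + 1, -1)"
    unfolding fragment_resonant_hexagons_def by (auto split: if_splits)
  then show ?thesis
    by cases (use determined in \<open>simp_all add: alternating_hexagon_iff ac_simps\<close>)
qed

lemma fragment_resonant_hexagons_position:
  "c \<in> fragment_resonant_hexagons M a \<Longrightarrow>
     a \<le> fst c \<and> fst c \<le> a + 2 \<and> (fst c = a \<longrightarrow> hedge a 0 \<in> M) \<and> (fst c = a + 2 \<longrightarrow> hedge (a + 3) 0 \<in> M)"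
  by (auto simp: fragment_resonant_hexagons_def split: if_splits)

lemma fragment_resonant_hexagons_subset:
  "fragment_resonant_hexagons M a \<subseteq> {(a, 0), (a + 2, 0), (a + 1, 1), (a + 1, -1)}"
  by (simp add: fragment_resonant_hexagons_def)

lemma fragment_resonant_hexagons_vertically_apart:
  "c \<in> fragment_resonant_hexagons M a \<Longrightarrow> d \<in> fragment_resonant_hexagons M a \<Longrightarrow> c \<noteq> d \<Longrightarrow>
     \<bar>snd c - snd d\<bar> = 2"
  by (auto simp: fragment_resonant_hexagons_def split: if_splits)

lemma fragment_resonant_hexagons_disjoint:
  assumes PM: "perfect_matching (pyrene_V n) (pyrene_E n) M" and "i < j" "j < n"
    and c: "c \<in> fragment_resonant_hexagons M (4 * int i)"
    and d: "d \<in> fragment_resonant_hexagons M (4 * int j)"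
  shows "hex_verts c \<inter> hex_verts d = {}"
proof (cases "fst d - fst c > 2")
  case True
  then show ?thesis by (intro hex_verts_disjointI) simp
next
  case False
  define a where "a = 4 * int i"
  have "a + 4 \<le> 4 * int j" using \<open>i < j\<close> by (simp add: a_def)
  then have "fst c = a + 2" "fst d = a + 4" "4 * int j = a + 4"
    using False fragment_resonant_hexagons_position[OF c] fragment_resonant_hexagons_position[OF d]
    unfolding a_def by linarith+
  then have "hedge (a + 3) 0 \<in> M" "hedge (a + 4) 0 \<in> M"
    using fragment_resonant_hexagons_position[OF c] fragment_resonant_hexagons_position[OF d]
    unfolding a_def by auto
  moreover have "exactly_one [hedge (a + 3) 0 \<in> M, hedge (a + 4) 0 \<in> M, vedge (a + 4) 0 \<in> M]"
    using fragment_vertex_constraints(15)[OF PM _ a_def] \<open>i < j\<close> \<open>j < n\<close> by simp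
  ultimately show ?thesis by simp
qed

lemma resonant_set_canonical:
  assumes PM: "perfect_matching (pyrene_V n) (pyrene_E n) M"
  shows "resonant_set (pyrene_hexagons n) M (canonical_resonant_set n M)"
  unfolding resonant_set_def
proof (intro conjI ballI impI)
  show "canonical_resonant_set n M \<subseteq> pyrene_hexagons n"
    unfolding canonical_resonant_set_def
  proof (rule UN_least)
    fix i assume "i \<in> {..<n}"
    then show "fragment_resonant_hexagons M (4 * int i) \<subseteq> pyrene_hexagons n"
      using fragment_resonant_hexagons_subset fragment_hexagons_subset
      by (meson lessThan_iff order_trans)
  qed
next
  fix c assume "c \<in> canonical_resonant_set n M"
  then obtain i where "i < n" "c \<in> fragment_resonant_hexagons M (4 * int i)"
    unfolding canonical_resonant_set_def by blast
  then show "alternating_cycle M (hex_elist c)"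
    using fragment_resonant_hexagons_alternating[OF PM] by blast
next
  fix c d assume "c \<in> canonical_resonant_set n M" "d \<in> canonical_resonant_set n M" "c \<noteq> d"
  then obtain i j where i: "i < n" "c \<in> fragment_resonant_hexagons M (4 * int i)"
    and j: "j < n" "d \<in> fragment_resonant_hexagons M (4 * int j)"
    unfolding canonical_resonant_set_def by blast
  consider "i < j" | "i = j" | "j < i" by linarith
  then show "hex_verts c \<inter> hex_verts d = {}"
  proof cases
    case 1
    show ?thesis using fragment_resonant_hexagons_disjoint[OF PM 1 j(1) i(2) j(2)] .
  next
    case 2
    then show ?thesis
      using fragment_resonant_hexagons_vertically_apart[OF i(2) _ \<open>c \<noteq> d\<close>] j(2)
      by (intro hex_verts_disjointI) simp
  next
    case 3
    show ?thesis
      using fragment_resonant_hexagons_disjoint[OF PM 3 i(1) j(2) i(2)] by (simp add: Int_commute)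
  qed
qed

definition fragment_key_edges :: "int \<Rightarrow> edge set" where
  "fragment_key_edges a = {hedge a 0, hedge (a + 3) 0, hedge (a + 1) 1, hedge (a + 1) 0}"

lemma fragment_edges_agree:
  assumes PM: "perfect_matching (pyrene_V n) (pyrene_E n) M"
    and PM': "perfect_matching (pyrene_V n) (pyrene_E n) M'"
    and key: "\<And>j e. j < n \<Longrightarrow> e \<in> fragment_key_edges (4 * int j) \<Longrightarrow> e \<in> M' \<longleftrightarrow> e \<in> M"
    and i: "i < n" and e: "e \<in> fragment_edges (4 * int i)"
  shows "e \<in> M' \<longleftrightarrow> e \<in> M"
proof -
  define a where "a = 4 * int i"
  have key_i: "hedge a 0 \<in> M' \<longleftrightarrow> hedge a 0 \<in> M" "hedge (a + 3) 0 \<in> M' \<longleftrightarrow> hedge (a + 3) 0 \<in> M"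
    "hedge (a + 1) 1 \<in> M' \<longleftrightarrow> hedge (a + 1) 1 \<in> M" "hedge (a + 1) 0 \<in> M' \<longleftrightarrow> hedge (a + 1) 0 \<in> M"
    using key[OF i] unfolding fragment_key_edges_def a_def by simp_all
  have left: "hedge (a - 1) 0 \<in> M' \<longleftrightarrow> hedge (a - 1) 0 \<in> M"
  proof (cases i)
    case 0
    then show ?thesis using pyrene_end_edges_unmatched[OF PM] pyrene_end_edges_unmatched[OF PM']
      by (simp add: a_def)
  next
    case (Suc k)
    then have "a - 1 = 4 * int k + 3" by (simp add: a_def)
    then show ?thesis using key[of k] i Suc by (simp add: fragment_key_edges_def)
  qed
  have right: "hedge (a + 4) 0 \<in> M' \<longleftrightarrow> hedge (a + 4) 0 \<in> M"
  proof (cases "Suc i < n")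
    case True
    then show ?thesis using key[of "Suc i"] by (simp add: fragment_key_edges_def a_def ac_simps)
  next
    case False
    then have "a + 4 = 4 * int n" using i by (simp add: a_def)
    then show ?thesis using pyrene_end_edges_unmatched[OF PM] pyrene_end_edges_unmatched[OF PM']
      by simp
  qed
  from e show ?thesis
    unfolding a_def[symmetric] fragment_edges_eq
    by (elim insertE emptyE; simp only: fragment_matching_determined(1-15)[OF PM i a_def]
        fragment_matching_determined(1-15)[OF PM' i a_def] key_i left right)
qed

lemma pyrene_perfect_matchings_eqI:
  assumes PM: "perfect_matching (pyrene_V n) (pyrene_E n) M"
    and PM': "perfect_matching (pyrene_V n) (pyrene_E n) M'"
    and key: "\<And>i e. i < n \<Longrightarrow> e \<in> fragment_key_edges (4 * int i) \<Longrightarrow> e \<in> M' \<longleftrightarrow> e \<in> M"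
  shows "M' = M"
proof (rule set_eqI)
  fix e
  show "e \<in> M' \<longleftrightarrow> e \<in> M"
  proof (cases "e \<in> pyrene_E n")
    case True
    then obtain i where "i < n" "e \<in> fragment_edges (4 * int i)"
      unfolding pyrene_E_eq by blast
    then show ?thesis using fragment_edges_agree[OF PM PM'] key by blast
  next
    case False
    then show ?thesis using PM PM' unfolding perfect_matching_def by blast
  qed
qed

lemma fragment_key_edges_forced:
  assumes PM: "perfect_matching (pyrene_V n) (pyrene_E n) M"
    and PM': "perfect_matching (pyrene_V n) (pyrene_E n) M'"
    and forced: "matched_bottom_edge M ` canonical_resonant_set n M \<subseteq> M'"
    and i: "i < n" and e: "e \<in> fragment_key_edges (4 * int i)"
  shows "e \<in> M' \<longleftrightarrow> e \<in> M"
proof -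
  define a where "a = 4 * int i"
  have bottom: "hedge x y \<in> M \<and> hedge x y \<in> M' \<or> hedge x y \<notin> M \<and> hedge (x + 1) y \<in> M'"
    if "(x, y) \<in> fragment_resonant_hexagons M a" for x y
    using forced that i unfolding matched_bottom_edge_mem_iff[symmetric] canonical_resonant_set_def a_def
    by blast
  note determined =
    fragment_matching_determined[OF PM i a_def] fragment_matching_determined[OF PM' i a_def]
  consider (left) "hedge a 0 \<in> M" | (right) "hedge a 0 \<notin> M" "hedge (a + 3) 0 \<in> M"
    | (middle) "hedge a 0 \<notin> M" "hedge (a + 3) 0 \<notin> M"
    by blast
  then have "(hedge a 0 \<in> M' \<longleftrightarrow> hedge a 0 \<in> M) \<and> (hedge (a + 3) 0 \<in> M' \<longleftrightarrow> hedge (a + 3) 0 \<in> M) \<and>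
    (hedge (a + 1) 1 \<in> M' \<longleftrightarrow> hedge (a + 1) 1 \<in> M) \<and> (hedge (a + 1) 0 \<in> M' \<longleftrightarrow> hedge (a + 1) 0 \<in> M)"
  proof cases
    case left
    then have "hedge a 0 \<in> M'"
      using bottom[of a 0] by (simp add: fragment_resonant_hexagons_def)
    with left show ?thesis using determined by sat
  next
    case right
    then have "hedge (a + 2) 0 \<in> M \<and> hedge (a + 2) 0 \<in> M' \<or>
        hedge (a + 2) 0 \<notin> M \<and> hedge (a + 3) 0 \<in> M'"
      using bottom[of "a + 2" 0] by (simp add: fragment_resonant_hexagons_def ac_simps)
    with right show ?thesis using determined by sat
  next
    case middle
    then have "hedge (a + 1) 1 \<in> M \<and> hedge (a + 1) 1 \<in> M' \<or>
        hedge (a + 1) 1 \<notin> M \<and> hedge (a + 2) 1 \<in> M'"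
      "hedge (a + 1) (-1) \<in> M \<and> hedge (a + 1) (-1) \<in> M' \<or>
        hedge (a + 1) (-1) \<notin> M \<and> hedge (a + 2) (-1) \<in> M'"
      using bottom[of "a + 1" 1] bottom[of "a + 1" "-1"]
      by (simp_all add: fragment_resonant_hexagons_def ac_simps)
    with middle show ?thesis using determined by sat
  qed
  then show ?thesis using e unfolding fragment_key_edges_def a_def by blast
qed

lemma forcing_set_canonical:
  assumes PM: "perfect_matching (pyrene_V n) (pyrene_E n) M"
  shows "forcing_set (pyrene_V n) (pyrene_E n) M (matched_bottom_edge M ` canonical_resonant_set n M)"
  unfolding forcing_set_def
proof (intro conjI allI impI)
  show "matched_bottom_edge M ` canonical_resonant_set n M \<subseteq> M"
  proof (rule image_subsetI)
    fix c assume "c \<in> canonical_resonant_set n M"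
    then have "alternating_cycle M (hex_elist c)"
      using resonant_set_canonical[OF PM] unfolding resonant_set_def by blast
    then show "matched_bottom_edge M c \<in> M" by (rule matched_bottom_edge_in)
  qed
  fix M' assume M': "perfect_matching (pyrene_V n) (pyrene_E n) M' \<and>
    matched_bottom_edge M ` canonical_resonant_set n M \<subseteq> M'"
  show "M' = M"
  proof (rule pyrene_perfect_matchings_eqI[OF PM])
    show "perfect_matching (pyrene_V n) (pyrene_E n) M'" using M' ..
    show "e \<in> M' \<longleftrightarrow> e \<in> M" if "i < n" "e \<in> fragment_key_edges (4 * int i)" for i e
      using M' fragment_key_edges_forced[OF PM _ _ that] by blast
  qed
qed

theorem lemma2p3:
  fixes n :: nat and M :: "edge set"
  assumes "n \<ge> 1"
    and "perfect_matching (pyrene_V n) (pyrene_E n) M"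
  shows "forcing_number (pyrene_V n) (pyrene_E n) M = max_resonant (pyrene_hexagons n) M"
proof -
  note PM = assms(2)
  have R: "resonant_set (pyrene_hexagons n) M (canonical_resonant_set n M)"
    by (rule resonant_set_canonical[OF PM])
  then have "finite (canonical_resonant_set n M)"
    using finite_pyrene_hexagons unfolding resonant_set_def by (blast intro: finite_subset)
  then have "card (matched_bottom_edge M ` canonical_resonant_set n M)
      \<le> card (canonical_resonant_set n M)"
    by (rule card_image_le)
  with PM finite_pyrene_E finite_pyrene_hexagons hex_edges_subset_pyrene_E
    forcing_set_canonical[OF PM] R
  show ?thesis by (rule forcing_number_eq_max_resonant)
qed

end
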